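(* Let $B$ be a block of a graph $\mathcal{G}$. If every vertex of $B$ has finite degree and for each pair of vertices $(a,b)$ of $B$ there are only finitely many distinct simple paths in $\mathcal{G}$ joining $a$ to $b$, then $B$ is finite.
   Context: A vertex $a$ of a graph is a cutvertex if there are two other vertices in its connected component such that every path joining them passes through $a$. A block of a graph is a maximal connected subgraph that has no cutvertex. *)

theory Defs
  imports Main
begin

definition graph :: "'a set \<Rightarrow> ('a \<Rightarrow> 'a \<Rightarrow> bool) \<Rightarrow> bool" where
  "graph V E \<longleftrightarrow> (\<forall>x y. E x y \<longrightarrow> E y x) \<and> (\<forall>x. \<not> E x x)
     \<and> (\<forall>x y. E x y \<longrightarrow> x \<in> V \<and> y \<in> V)"

definition is_path :: "'a set \<Rightarrow> ('a \<Rightarrow> 'a \<Rightarrow> bool) \<Rightarrow> 'a list \<Rightarrow> bool" where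
  "is_path V E p \<longleftrightarrow> p \<noteq> [] \<and> set p \<subseteq> V \<and> distinct p \<and> successively E p"

definition joins :: "'a list \<Rightarrow> 'a \<Rightarrow> 'a \<Rightarrow> bool" where
  "joins p a b \<longleftrightarrow> hd p = a \<and> last p = b"

definition paths_between :: "'a set \<Rightarrow> ('a \<Rightarrow> 'a \<Rightarrow> bool) \<Rightarrow> 'a \<Rightarrow> 'a \<Rightarrow> 'a list set" where
  "paths_between V E a b = {p. is_path V E p \<and> joins p a b}"

definition connected_by :: "'a set \<Rightarrow> ('a \<Rightarrow> 'a \<Rightarrow> bool) \<Rightarrow> 'a \<Rightarrow> 'a \<Rightarrow> bool" where
  "connected_by V E a b \<longleftrightarrow> paths_between V E a b \<noteq> {}"

definition connected_graph :: "'a set \<Rightarrow> ('a \<Rightarrow> 'a \<Rightarrow> bool) \<Rightarrow> bool" where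
  "connected_graph V E \<longleftrightarrow> V \<noteq> {} \<and> (\<forall>a\<in>V. \<forall>b\<in>V. connected_by V E a b)"

definition cutvertex :: "'a set \<Rightarrow> ('a \<Rightarrow> 'a \<Rightarrow> bool) \<Rightarrow> 'a \<Rightarrow> bool" where
  "cutvertex V E a \<longleftrightarrow> a \<in> V \<and> (\<exists>x\<in>V. \<exists>y\<in>V. x \<noteq> a \<and> y \<noteq> a \<and> x \<noteq> y \<and>
      connected_by V E a x \<and> connected_by V E a y \<and>
      (\<forall>p\<in>paths_between V E x y. a \<in> set p))"

definition subgraph :: "'a set \<Rightarrow> ('a \<Rightarrow> 'a \<Rightarrow> bool) \<Rightarrow> 'a set \<Rightarrow> ('a \<Rightarrow> 'a \<Rightarrow> bool) \<Rightarrow> bool" where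
  "subgraph W F V E \<longleftrightarrow> graph W F \<and> W \<subseteq> V \<and> (\<forall>x y. F x y \<longrightarrow> E x y)"

definition no_cutvertex :: "'a set \<Rightarrow> ('a \<Rightarrow> 'a \<Rightarrow> bool) \<Rightarrow> bool" where
  "no_cutvertex V E \<longleftrightarrow> (\<forall>a. \<not> cutvertex V E a)"

definition is_block :: "'a set \<Rightarrow> ('a \<Rightarrow> 'a \<Rightarrow> bool) \<Rightarrow> 'a set \<Rightarrow> ('a \<Rightarrow> 'a \<Rightarrow> bool) \<Rightarrow> bool" where
  "is_block W F V E \<longleftrightarrow> subgraph W F V E \<and> connected_graph W F \<and> no_cutvertex W F \<and>
     (\<forall>W' F'. subgraph W' F' V E \<and> connected_graph W' F' \<and> no_cutvertex W' F' \<and>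
        W \<subseteq> W' \<and> (\<forall>x y. F x y \<longrightarrow> F' x y) \<longrightarrow> W' = W \<and> F' = F)"

definition degree_finite :: "('a \<Rightarrow> 'a \<Rightarrow> bool) \<Rightarrow> 'a \<Rightarrow> bool" where
  "degree_finite E v \<longleftrightarrow> finite {w. E v w}"

end

theory Submission
  imports Defs
begin

(* Fix a vertex a of the block B = (W,F) and call the "fan" of a the set of
   vertices lying on some path of B that starts at a and ends at a neighbour of a.
   The fan together with a is closed under adjacency in B: if w is on such a path p and
   u is a new neighbour of w, then since w is not a cutvertex there is a path from u back
   to a avoiding w, and its first part up to p can be spliced into p next to w, giving a
   path of the same kind through u.  As B is connected, all of W is a or in the fan.
   Every such path is also a path of G joining a to one of its finitely many neighbours,
   and there are only finitely many of those paths, so W is finite. *)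

lemma splice_path:
  assumes p: "is_path W F (pa @ w # pb @ x # pc)"
    and s: "is_path W F (w # s @ [x])"
    and disj: "set s \<inter> set (pa @ w # pb @ x # pc) = {}"
  shows "is_path W F (pa @ w # s @ x # pc)"
proof -
  have sp: "successively F (pa @ w # pb @ x # pc)" using p by (simp add: is_path_def)
  have head: "successively F (pa @ [w])"
    using sp successively_append_iff[of F "pa @ [w]" "pb @ x # pc"] by simp
  have tail: "successively F (x # pc)"
    using sp successively_append_iff[of F "pa @ w # pb" "x # pc"] by simp
  have "successively F ((w # s) @ [x])" using s by (simp add: is_path_def)
  then have "successively F ((w # s) @ x # pc)"
    using tail successively_append_iff[of F "w # s"] by simp
  then have "successively F (pa @ w # s @ x # pc)"
    using head successively_append_iff[of F pa "[w]"] successively_append_iff[of F pa "w # s @ x # pc"]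
    by simp
  then show ?thesis using p s disj by (auto simp: is_path_def)
qed

lemma is_path_rev:
  assumes sym: "\<forall>x y. F x y \<longrightarrow> F y x" and p: "is_path W F p"
  shows "is_path W F (rev p)"
proof -
  have "successively (\<lambda>x y. F y x) p"
    using p sym by (auto simp: is_path_def elim: successively_mono)
  then show ?thesis using p by (simp add: is_path_def successively_rev)
qed

lemma split_list_two:
  assumes "w \<in> set p" "x \<in> set p" "w \<noteq> x"
  shows "\<exists>pa pb pc. p = pa @ w # pb @ x # pc \<or> p = pa @ x # pb @ w # pc"
proof -
  obtain p1 p2 where p: "p = p1 @ x # p2" using assms(2) split_list by metis
  from assms(1,3) p consider "w \<in> set p1" | "w \<in> set p2" by auto
  then show ?thesis
  proof cases
    case 1
    then obtain pa pb where "p1 = pa @ w # pb" using split_list by metis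
    then show ?thesis using p by auto
  next
    case 2
    then obtain pb pc where "p2 = pb @ w # pc" using split_list by metis
    then show ?thesis using p by auto
  qed
qed

lemma reroute_through:
  assumes sym: "\<forall>x y. F x y \<longrightarrow> F y x"
    and p: "is_path W F p" and r: "is_path W F r"
    and wp: "w \<in> set p" and vp: "v \<notin> set p" and wv: "F w v"
    and hr: "hd r = v" and lr: "last r \<in> set p" and wr: "w \<notin> set r"
  shows "\<exists>p'. is_path W F p' \<and> hd p' = hd p \<and> last p' = last p \<and> v \<in> set p'"
proof -
  have "\<exists>y\<in>set r. y \<in> set p" using lr r by (auto simp: is_path_def)
  then obtain s x r2 where rs: "r = s @ x # r2" and xp: "x \<in> set p"
    and sp: "\<forall>y\<in>set s. y \<notin> set p"
    using split_list_first_prop[of r "\<lambda>y. y \<in> set p"] by blast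
  have sne: "s \<noteq> []" using rs hr vp xp by (cases s) auto
  have vs: "v \<in> set s" and hs: "hd s = v" using rs hr sne by (cases s; auto)+
  have wx: "w \<noteq> x" using wr rs by auto
  have detour: "is_path W F (w # s @ [x])"
  proof -
    have "successively F (s @ [x])" using r rs
      by (auto simp: is_path_def successively_append_iff)
    then have "successively F (w # s @ [x])" using wv hs sne by (cases s) auto
    moreover have "w \<notin> set s" using sp wp by auto
    ultimately show ?thesis using r rs wx p wp by (auto simp: is_path_def)
  qed
  have disj: "set s \<inter> set p = {}" using sp by auto
  obtain pa pb pc where "p = pa @ w # pb @ x # pc \<or> p = pa @ x # pb @ w # pc"
    using split_list_two[OF wp xp wx] by blast
  then show ?thesis
  proof
    assume pw: "p = pa @ w # pb @ x # pc"
    have "is_path W F (pa @ w # s @ x # pc)"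
      using splice_path[OF p[unfolded pw] detour disj[unfolded pw]] .
    then show ?thesis using pw vs by (intro exI[of _ "pa @ w # s @ x # pc"]) (cases pa; auto)
  next
    assume px: "p = pa @ x # pb @ w # pc"
    have "is_path W F (rev pc @ w # rev pb @ x # rev pa)"
      using is_path_rev[OF sym p] px by simp
    then have "is_path W F (rev pc @ w # s @ x # rev pa)"
      using splice_path[OF _ detour] disj px by force
    then have "is_path W F (pa @ x # rev s @ w # pc)"
      using is_path_rev[OF sym] by fastforce
    then show ?thesis using px vs by (intro exI[of _ "pa @ x # rev s @ w # pc"]) (cases pa; auto)
  qed
qed

definition fan :: "'a set \<Rightarrow> ('a \<Rightarrow> 'a \<Rightarrow> bool) \<Rightarrow> 'a \<Rightarrow> 'a set" where
  "fan W F a = {v. \<exists>p. is_path W F p \<and> hd p = a \<and> F a (last p) \<and> v \<in> set p}"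

lemma fan_closed:
  assumes g: "graph W F" and conn: "connected_graph W F" and nc: "no_cutvertex W F"
    and aW: "a \<in> W" and w: "w \<in> insert a (fan W F a)" and wu: "F w u"
  shows "u \<in> insert a (fan W F a)"
proof -
  have sym: "\<forall>x y. F x y \<longrightarrow> F y x" using g by (simp add: graph_def)
  have uW: "u \<in> W" and wW: "w \<in> W" using g wu by (auto simp: graph_def)
  have uw: "u \<noteq> w" using g wu by (auto simp: graph_def)
  consider "u = a" | "w = a" | "u \<noteq> a" "w \<noteq> a" by blast
  then show ?thesis
  proof cases
    case 2
    then have "is_path W F [a, u]" using wu uw aW uW by (simp add: is_path_def)
    then show ?thesis using wu 2 unfolding fan_def by force
  next
    case 3
    then obtain p where p: "is_path W F p" "hd p = a" "F a (last p)" "w \<in> set p"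
      using w by (auto simp: fan_def)
    show ?thesis
    proof (cases "u \<in> set p")
      case True then show ?thesis using p by (auto simp: fan_def)
    next
      case up: False
      txt \<open>Since w is not a cutvertex, some path from u to a avoids w.\<close>
      have "\<not> cutvertex W F w" using nc by (simp add: no_cutvertex_def)
      moreover have "connected_by W F w u" "connected_by W F w a"
        using conn uW wW aW by (auto simp: connected_graph_def)
      ultimately obtain r where r: "r \<in> paths_between W F u a" "w \<notin> set r"
        using wW uW aW 3 uw not_sym[OF 3(2)] unfolding cutvertex_def by blast
      have "last r \<in> set p" using r(1) p(1,2)
        by (auto simp: paths_between_def joins_def is_path_def)
      then obtain p' where "is_path W F p'" "hd p' = hd p" "last p' = last p" "u \<in> set p'"
        using reroute_through[OF sym p(1) _ p(4) up wu _ _ r(2)] r(1)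
        by (auto simp: paths_between_def joins_def)
      then show ?thesis using p by (auto simp: fan_def)
    qed
  qed simp
qed

lemma walk_in_closed_set:
  assumes closed: "\<And>w u. w \<in> S \<Longrightarrow> F w u \<Longrightarrow> u \<in> S"
  shows "successively F q \<Longrightarrow> q \<noteq> [] \<Longrightarrow> hd q \<in> S \<Longrightarrow> set q \<subseteq> S"
proof (induction q)
  case (Cons x q)
  then show ?case using closed by (cases q) auto
qed simp

lemma no_cutvertex_fan_covers:
  assumes g: "graph W F" and conn: "connected_graph W F" and nc: "no_cutvertex W F"
    and aW: "a \<in> W"
  shows "W \<subseteq> insert a (fan W F a)"
proof
  fix v assume "v \<in> W"
  then obtain q where q: "is_path W F q" "hd q = a" "last q = v"
    using conn aW by (auto simp: connected_graph_def connected_by_def paths_between_def joins_def)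
  have "set q \<subseteq> insert a (fan W F a)"
    using walk_in_closed_set[of "insert a (fan W F a)" F q] fan_closed[OF g conn nc aW] q
    by (auto simp: is_path_def)
  moreover have "v \<in> set q" using q last_in_set by (auto simp: is_path_def)
  ultimately show "v \<in> insert a (fan W F a)" by blast
qed

lemma subgraph_is_path:
  assumes "subgraph W F V E" and "is_path W F p"
  shows "is_path V E p"
  using assms by (auto simp: subgraph_def is_path_def elim: successively_mono)

lemma fan_subgraph:
  assumes "subgraph W F V E"
  shows "fan W F a \<subseteq> (\<Union>c\<in>{c. E a c} \<inter> W. \<Union> (set ` paths_between V E a c))"
proof
  fix v assume "v \<in> fan W F a"
  then obtain p where p: "is_path W F p" "hd p = a" "F a (last p)" "v \<in> set p"
    by (auto simp: fan_def)
  have "E a (last p)" "last p \<in> W" using assms p(3) by (auto simp: subgraph_def graph_def)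
  moreover have "p \<in> paths_between V E a (last p)"
    using subgraph_is_path[OF assms p(1)] p(2) by (simp add: paths_between_def joins_def)
  ultimately show "v \<in> (\<Union>c\<in>{c. E a c} \<inter> W. \<Union> (set ` paths_between V E a c))"
    using p(4) by blast
qed

theorem mainTheorem8:
  fixes V :: "'a set" and E :: "'a \<Rightarrow> 'a \<Rightarrow> bool"
    and W :: "'a set" and F :: "'a \<Rightarrow> 'a \<Rightarrow> bool"
  assumes "graph V E"
    and "is_block W F V E"
    and "\<forall>v\<in>W. degree_finite E v"
    and "\<forall>a\<in>W. \<forall>b\<in>W. finite (paths_between V E a b)"
  shows "finite W"
proof -
  have sub: "subgraph W F V E" and conn: "connected_graph W F" and nc: "no_cutvertex W F"
    using assms(2) by (auto simp: is_block_def)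
  obtain a where aW: "a \<in> W" using conn by (auto simp: connected_graph_def)
  have "W \<subseteq> insert a (fan W F a)"
    using no_cutvertex_fan_covers[OF _ conn nc aW] sub by (simp add: subgraph_def)
  also have "\<dots> \<subseteq> insert a (\<Union>c\<in>{c. E a c} \<inter> W. \<Union> (set ` paths_between V E a c))"
    using fan_subgraph[OF sub] by blast
  finally show ?thesis
    using assms(3,4) aW by (auto simp: degree_finite_def intro: finite_subset)
qed

end
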